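(* The algorithm RATT described in the context runs in $O(|\mathcal{U}_{\mathcal{V}}|^2)$ time, where $\mathcal{U}_{\mathcal{V}}=\bigcup_{i\in\mathcal{V}}\mathcal{U}_i$ is the joint set of available control inputs of all robots (each evaluation of the objective $\Phi$ counting as one operation).
   Context: There are $N$ robots $\mathcal{V}=\{1,\dots,N\}$, robot $i$ choosing its control input from a finite nonempty set $\mathcal{U}_i$. $\Phi(\mathcal{W})$ denotes the team tracking quality obtained when the robots in $\mathcal{W}\subseteq\mathcal{V}$ (with their chosen inputs) fuse their measurements. Given integers $\alpha_s\le N$ and $\alpha_c\le N(N-1)/2$: CAA$(N,\alpha_c)$: set $e_r=N(N-1)/2-\alpha_c$; for $n=1,\dots,N$ in increasing order compute $q_n=\lfloor N/n\rfloor$, $r_n=N-nq_n$, $\bar e_n=q_n\frac{n(n-1)}{2}+\frac{r_n(r_n-1)}{2}$, and let $n_{\max}$ be the first $n$ with $e_r\le\bar e_n$; return $\alpha_{c,s}=N-n_{\max}$. RATT: compute $\alpha_{c,s}$ by CAA, set $\alpha=\alpha_s+\alpha_{c,s}$. If $\alpha<N$: for each robot $i$ compute $\max_{\mathbf{u}_i\in\mathcal{U}_i}\Phi(\{i\})$; select the $\alpha$ robots with the largest values and assign each the input attaining its individual maximum; then assign inputs to the remaining robots by the standard greedy algorithm (starting from $\mathcal{V}_g=\emptyset$, repeatedly choose an unassigned robot and input maximizing the marginal gain $\Phi(\mathcal{V}_g\cup\{i'\})-\Phi(\mathcal{V}_g)$ and add it to $\mathcal{V}_g$). If $\alpha\ge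 N$: assign each robot the input maximizing $\Phi(\{i\})$. *)

theory Defs
  imports Main "HOL.Real"
begin

text \<open>Robots are indexed 0..N-1 (N = length Us);
  robot i's finite nonempty input set is given as the distinct list Us!i.
  Every returned cost counts one unit per evaluation of Phi and one unit per
  elementary step (comparison / constant-size arithmetic block).\<close>

text \<open>Argmax by linear scan: returns (argmax, max value, cost).  Each element
  costs one evaluation of f and one comparison.\<close>
fun amax :: "('a \<Rightarrow> real) \<Rightarrow> 'a list \<Rightarrow> 'a \<times> real \<times> nat" where
  "amax f [] = (undefined, 0, 0)"
| "amax f [x] = (x, f x, 1)"
| "amax f (x # y # ys) =
     (let (b, v, c) = amax f (y # ys); w = f x
      in if w > v then (x, w, c + 2) else (b, v, c + 2))"

definition ebar :: "nat \<Rightarrow> nat \<Rightarrow> nat" where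
  "ebar N n = (let q = N div n; r = N - n * q in q * (n * (n - 1) div 2) + r * (r - 1) div 2)"

function caa_search :: "nat \<Rightarrow> nat \<Rightarrow> nat \<Rightarrow> nat \<times> nat" where
  "caa_search N er n =
     (if N \<le> n \<or> er \<le> ebar N n then (n, 1)
      else (let (m, c) = caa_search N er (Suc n) in (m, c + 1)))"
  by pat_completeness auto
termination by (relation "measure (\<lambda>(N, er, n). N - n)") auto

definition caa :: "nat \<Rightarrow> nat \<Rightarrow> nat \<times> nat" where
  "caa N \<alpha>c = (let er = N * (N - 1) div 2 - \<alpha>c; (nmax, c) = caa_search N er 1
               in (N - nmax, c + 1))"

fun select_top :: "nat \<Rightarrow> real list \<Rightarrow> nat list \<Rightarrow> nat list \<times> nat" where
  "select_top 0 vals rem = ([], 0)"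
| "select_top (Suc k) vals rem =
     (if rem = [] then ([], 0)
      else (let (b, _, c) = amax (\<lambda>i. vals ! i) rem;
                (r, c') = select_top k vals (removeAll b rem)
            in (b # r, c + c' + 1)))"

fun greedy :: "nat \<Rightarrow> ((nat \<times> 'u) set \<Rightarrow> real) \<Rightarrow> 'u list list \<Rightarrow> nat list
                 \<Rightarrow> (nat \<times> 'u) set \<Rightarrow> (nat \<times> 'u) set \<times> nat" where
  "greedy 0 \<Phi> Us rem Vg = (Vg, 0)"
| "greedy (Suc k) \<Phi> Us rem Vg =
     (let cands = concat (map (\<lambda>i. map (\<lambda>u. (i, u)) (Us ! i)) rem)
      in if cands = [] then (Vg, 1)
         else (let base = \<Phi> Vg;
                   (b, v, c) = amax (\<lambda>x. \<Phi> (insert x Vg) - base) cands;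
                   (V', c') = greedy k \<Phi> Us (removeAll (fst b) rem) (insert b Vg)
               in (V', c + c' + 2)))"

definition ratt :: "((nat \<times> 'u) set \<Rightarrow> real) \<Rightarrow> 'u list list \<Rightarrow> nat \<Rightarrow> nat
                     \<Rightarrow> (nat \<times> 'u) set \<times> nat" where
  "ratt \<Phi> Us \<alpha>s \<alpha>c =
    (let N = length Us;
         (\<alpha>cs, c0) = caa N \<alpha>c;
         \<alpha> = \<alpha>s + \<alpha>cs;
         indiv = map (\<lambda>i. amax (\<lambda>u. \<Phi> {(i, u)}) (Us ! i)) [0..<N];
         c1 = sum_list (map (\<lambda>t. snd (snd t)) indiv)
     in if \<alpha> < N then
          (let (top, c2) = select_top \<alpha> (map (\<lambda>t. fst (snd t)) indiv) [0..<N];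
               A = (\<lambda>i. (i, fst (indiv ! i))) ` set top;
               rem = filter (\<lambda>i. i \<notin> set top) [0..<N];
               (G, c3) = greedy (length rem) \<Phi> Us rem {}
           in (A \<union> G, c0 + c1 + c2 + c3 + 1))
        else ((\<lambda>i. (i, fst (indiv ! i))) ` {..<N}, c0 + c1 + N + 1))"

text \<open>Joint input set U_V, with inputs of different robots kept distinct.\<close>
definition joint_inputs :: "'u list list \<Rightarrow> (nat \<times> 'u) set" where
  "joint_inputs Us = {(i, u). i < length Us \<and> u \<in> set (Us ! i)}"

end

theory Submission
  imports Defs
begin

text \<open>Every argmax scan costs at most twice the length of the scanned list. CAA scans
  at most N candidates; selecting the top \<open>\<alpha> < N\<close> robots takes \<open>\<alpha>\<close> scans over at most
  N robots; the greedy phase runs at most N rounds, each scanning at most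
  \<open>M = |U\<^sub>V|\<close> (robot, input) candidates. Since every robot has an input, \<open>N \<le> M\<close>,
  so the total cost is \<open>O(N\<^sup>2 + N M) = O(M\<^sup>2)\<close>.\<close>

lemma amax_cost: "snd (snd (amax f xs)) \<le> 2 * length xs"
  by (induction f xs rule: amax.induct) (auto simp: Let_def split: prod.splits)

declare caa_search.simps [simp del]

lemma caa_search_cost: "snd (caa_search N er n) \<le> Suc (N - n)"
proof (induction N er n rule: caa_search.induct)
  case (1 N er n)
  show ?case
  proof (cases "N \<le> n \<or> er \<le> ebar N n")
    case True
    then show ?thesis by (subst caa_search.simps) simp
  next
    case False
    then have "snd (caa_search N er n) = snd (caa_search N er (Suc n)) + 1"
      by (subst caa_search.simps) (simp add: Let_def split: prod.splits)
    with "1.IH"[OF False] False show ?thesis by arith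
  qed
qed

lemma caa_cost: "snd (caa N \<alpha>c) \<le> N + 2"
proof -
  obtain n c where search: "caa_search N (N * (N - 1) div 2 - \<alpha>c) 1 = (n, c)"
    by (metis prod.exhaust)
  then have "c \<le> N + 1"
    using caa_search_cost[of N "N * (N - 1) div 2 - \<alpha>c" 1] by simp
  moreover have "snd (caa N \<alpha>c) = c + 1"
    unfolding caa_def Let_def search by simp
  ultimately show ?thesis by simp
qed

lemma select_top_cost: "snd (select_top k vals rem) \<le> k * (2 * length rem + 1)"
proof (induction k vals rem rule: select_top.induct)
  case (1 vals rem)
  then show ?case by simp
next
  case (2 k vals rem)
  show ?case
  proof (cases "rem = []")
    case True
    then show ?thesis by simp
  next
    case False
    obtain b v c where scan: "amax (\<lambda>i. vals ! i) rem = (b, v, c)"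
      by (metis prod.exhaust)
    obtain r c' where rest: "select_top k vals (removeAll b rem) = (r, c')"
      by (metis prod.exhaust)
    have "c \<le> 2 * length rem"
      using amax_cost[of "\<lambda>i. vals ! i" rem] scan by simp
    moreover have "c' \<le> k * (2 * length rem + 1)"
    proof -
      have "c' \<le> k * (2 * length (removeAll b rem) + 1)"
        using "2.IH"[OF False, of "(b, v, c)" b "(v, c)" v c] scan rest by simp
      also have "\<dots> \<le> k * (2 * length rem + 1)"
        using length_removeAll_less_eq[of b rem] by simp
      finally show ?thesis .
    qed
    moreover have "snd (select_top (Suc k) vals rem) = c + c' + 1"
      using False scan rest by simp
    ultimately show ?thesis by simp
  qed
qed

lemma greedy_cost:
  "snd (greedy k \<Phi> Us rem Vg) \<le> k * (2 * sum_list (map (\<lambda>i. length (Us ! i)) rem) + 3)"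
proof (induction k arbitrary: rem Vg)
  case 0
  then show ?case by simp
next
  case (Suc k)
  define cands where "cands = concat (map (\<lambda>i. map (\<lambda>u. (i, u)) (Us ! i)) rem)"
  define L where "L = sum_list (map (\<lambda>i. length (Us ! i)) rem)"
  show ?case
  proof (cases "cands = []")
    case True
    then show ?thesis by (simp add: cands_def[symmetric] Let_def)
  next
    case False
    obtain b v c where scan: "amax (\<lambda>x. \<Phi> (insert x Vg) - \<Phi> Vg) cands = (b, v, c)"
      by (metis prod.exhaust)
    obtain V' c' where rest: "greedy k \<Phi> Us (removeAll (fst b) rem) (insert b Vg) = (V', c')"
      by (metis prod.exhaust)
    have "length cands = L"
      by (simp add: cands_def L_def length_concat o_def)
    then have "c \<le> 2 * L"
      using amax_cost[of "\<lambda>x. \<Phi> (insert x Vg) - \<Phi> Vg" cands] scan by simp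
    moreover have "c' \<le> k * (2 * L + 3)"
    proof -
      have "c' \<le> k * (2 * sum_list (map (\<lambda>i. length (Us ! i)) (removeAll (fst b) rem)) + 3)"
        using Suc.IH[of "removeAll (fst b) rem" "insert b Vg"] rest by simp
      also have "\<dots> \<le> k * (2 * L + 3)"
        using sum_list_filter_le_nat[of "\<lambda>i. length (Us ! i)" "\<lambda>i. fst b \<noteq> i" rem]
        by (simp add: L_def removeAll_filter_not_eq)
      finally show ?thesis .
    qed
    moreover have "snd (greedy (Suc k) \<Phi> Us rem Vg) = c + c' + 2"
      using False scan rest by (simp add: cands_def[symmetric] Let_def)
    ultimately show ?thesis by (simp add: L_def[symmetric])
  qed
qed

lemma ratt_cost:
  fixes \<Phi> :: "(nat \<times> 'u) set \<Rightarrow> real" and Us :: "'u list list"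
  defines "N \<equiv> length Us" and "M \<equiv> sum_list (map length Us)"
  shows "snd (ratt \<Phi> Us \<alpha>s \<alpha>c) \<le> 3 + 2 * N + 2 * M + N * (2 * N + 1) + N * (2 * M + 3)"
proof -
  obtain \<alpha>cs c0 where caa: "caa N \<alpha>c = (\<alpha>cs, c0)"
    by (metis prod.exhaust)
  have c0: "c0 \<le> N + 2"
    using caa_cost[of N \<alpha>c] caa by simp
  define indiv where "indiv = map (\<lambda>i. amax (\<lambda>u. \<Phi> {(i, u)}) (Us ! i)) [0..<N]"
  define c1 where "c1 = sum_list (map (\<lambda>t. snd (snd t)) indiv)"
  have "c1 \<le> sum_list (map (\<lambda>i. 2 * length (Us ! i)) [0..<N])"
    unfolding c1_def indiv_def map_map o_def by (intro sum_list_mono amax_cost)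
  also have "\<dots> = 2 * M"
    by (simp add: M_def N_def sum_list_const_mult map_nth flip: map_map[unfolded o_def])
  finally have c1: "c1 \<le> 2 * M" .
  have unfold_ratt: "ratt \<Phi> Us \<alpha>s \<alpha>c =
    (if \<alpha>s + \<alpha>cs < N then
       (let (top, c2) = select_top (\<alpha>s + \<alpha>cs) (map (\<lambda>t. fst (snd t)) indiv) [0..<N];
            rem = filter (\<lambda>i. i \<notin> set top) [0..<N];
            (G, c3) = greedy (length rem) \<Phi> Us rem {}
        in ((\<lambda>i. (i, fst (indiv ! i))) ` set top \<union> G, c0 + c1 + c2 + c3 + 1))
     else ((\<lambda>i. (i, fst (indiv ! i))) ` {..<N}, c0 + c1 + N + 1))"
    unfolding ratt_def Let_def N_def[symmetric] indiv_def[symmetric] c1_def[symmetric] caa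
    by simp
  show ?thesis
  proof (cases "\<alpha>s + \<alpha>cs < N")
    case True
    obtain top c2 where top: "select_top (\<alpha>s + \<alpha>cs) (map (\<lambda>t. fst (snd t)) indiv) [0..<N] = (top, c2)"
      by (metis prod.exhaust)
    define rem where "rem = filter (\<lambda>i. i \<notin> set top) [0..<N]"
    obtain G c3 where greedy: "greedy (length rem) \<Phi> Us rem {} = (G, c3)"
      by (metis prod.exhaust)
    have "c2 \<le> N * (2 * N + 1)"
      using select_top_cost[of "\<alpha>s + \<alpha>cs" "map (\<lambda>t. fst (snd t)) indiv" "[0..<N]"] top True
        mult_le_mono1[of "\<alpha>s + \<alpha>cs" N "2 * N + 1"] by simp
    moreover have "c3 \<le> N * (2 * M + 3)"
    proof -
      have "c3 \<le> length rem * (2 * sum_list (map (\<lambda>i. length (Us ! i)) rem) + 3)"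
        using greedy_cost[of "length rem" \<Phi> Us rem "{}"] greedy by simp
      also have "\<dots> \<le> N * (2 * M + 3)"
      proof (rule mult_le_mono)
        show "length rem \<le> N"
          unfolding rem_def using length_filter_le[of _ "[0..<N]"] by simp
        have "sum_list (map (\<lambda>i. length (Us ! i)) rem) \<le> sum_list (map (\<lambda>i. length (Us ! i)) [0..<N])"
          unfolding rem_def by (rule sum_list_filter_le_nat)
        then show "2 * sum_list (map (\<lambda>i. length (Us ! i)) rem) + 3 \<le> 2 * M + 3"
          by (simp add: M_def N_def map_nth flip: map_map[unfolded o_def])
      qed
      finally show ?thesis .
    qed
    ultimately show ?thesis
      using c0 c1 True by (simp add: unfold_ratt top greedy flip: rem_def)
  next
    case False
    then show ?thesis
      using c0 c1 by (simp add: unfold_ratt)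
  qed
qed

lemma card_joint_inputs:
  assumes "\<forall>U\<in>set Us. distinct U"
  shows "card (joint_inputs Us) = sum_list (map length Us)"
proof -
  have "joint_inputs Us = Sigma {..<length Us} (\<lambda>i. set (Us ! i))"
    by (auto simp: joint_inputs_def)
  then have "card (joint_inputs Us) = (\<Sum>i<length Us. card (set (Us ! i)))"
    by (simp add: card_SigmaI)
  also have "\<dots> = (\<Sum>i<length Us. length (Us ! i))"
    using assms by (intro sum.cong) (auto simp: distinct_card)
  also have "\<dots> = sum_list (map length Us)"
    by (simp add: sum_list_sum_nth atLeast0LessThan)
  finally show ?thesis .
qed

lemma length_le_sum_list_length:
  assumes "\<forall>U\<in>set Us. U \<noteq> []"
  shows "length Us \<le> sum_list (map length Us)"
  using assms by (induction Us) (auto simp flip: length_greater_0_conv)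

lemma quadratic_cost_bound:
  fixes N M :: nat
  assumes "1 \<le> N" and "N \<le> M"
  shows "3 + 2 * N + 2 * M + N * (2 * N + 1) + N * (2 * M + 3) \<le> 15 * M ^ 2"
proof -
  have "1 \<le> M"
    using assms by simp
  then have "N * N \<le> M * M" and "N * M \<le> M * M" and "M * 1 \<le> M * M" and "1 * 1 \<le> M * M"
    using assms(2) by (simp_all only: mult_le_mono order_refl)
  moreover have "3 + 2 * N + 2 * M + N * (2 * N + 1) + N * (2 * M + 3)
      = 3 + 2 * M + 6 * N + 2 * (N * M) + 2 * (N * N)"
    by (simp add: algebra_simps)
  ultimately show ?thesis
    using assms unfolding power2_eq_square by linarith
qed

theorem theorem2:
  "\<exists>C::real. \<forall>(\<Phi>::(nat \<times> 'u) set \<Rightarrow> real) (Us::'u list list) \<alpha>s \<alpha>c.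
     Us \<noteq> [] \<longrightarrow> (\<forall>U\<in>set Us. U \<noteq> [] \<and> distinct U) \<longrightarrow>
     \<alpha>s \<le> length Us \<longrightarrow> \<alpha>c \<le> length Us * (length Us - 1) div 2 \<longrightarrow>
     real (snd (ratt \<Phi> Us \<alpha>s \<alpha>c)) \<le> C * real (card (joint_inputs Us)) ^ 2"
proof (intro exI[of _ 15] allI impI)
  fix \<Phi> :: "(nat \<times> 'u) set \<Rightarrow> real" and Us :: "'u list list" and \<alpha>s \<alpha>c :: nat
  assume "Us \<noteq> []" and inputs: "\<forall>U\<in>set Us. U \<noteq> [] \<and> distinct U"
  have card: "card (joint_inputs Us) = sum_list (map length Us)"
    using inputs by (simp add: card_joint_inputs)
  have "1 \<le> length Us"
    using \<open>Us \<noteq> []\<close> by (simp add: Suc_le_eq)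
  moreover have "length Us \<le> sum_list (map length Us)"
    using inputs by (simp add: length_le_sum_list_length)
  ultimately have "snd (ratt \<Phi> Us \<alpha>s \<alpha>c) \<le> 15 * (sum_list (map length Us)) ^ 2"
    by (intro order_trans[OF ratt_cost quadratic_cost_bound])
  then have "real (snd (ratt \<Phi> Us \<alpha>s \<alpha>c)) \<le> real (15 * card (joint_inputs Us) ^ 2)"
    unfolding card of_nat_le_iff .
  then show "real (snd (ratt \<Phi> Us \<alpha>s \<alpha>c)) \<le> 15 * real (card (joint_inputs Us)) ^ 2"
    by simp
qed

end
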